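(* An instance of the Side-Access Compact Retrieval Problem admits a feasible solution if and only if for every target $b\in\mathcal B$ and every stack $t<s(b)$ we have $h(t)\ge h(b)-R(b)$.
   Context: A slice is a sequence of stacks $T=(1,\dots,m)$, indexed from the entry side (stack $1$) outward; "left" means smaller index. Stack $t$ initially consists of $h(t)\ge 0$ unit loads (ULs) stacked without gaps; a UL at height $k$ has exactly $k$ ULs below it in its stack. A pick-list $\mathcal B$ of target ULs is given; target $b$ lies in stack $s(b)$ at initial height $h(b)$; $R(b)$ is the number of targets initially located below $b$ in stack $s(b)$. Retrieval proceeds in cycles $c=1,2,\dots$; $h_c(t)$, $h_c(b)$ are the heights of stack $t$ and of a not-yet-retrieved target $b$ at the start of cycle $c$ ($h_1=h$). In cycle $c$ one chooses clearance levels $\ell_c(t)\in\{0,\dots,h_c(t)\}$: the top $e_c(t)=h_c(t)-\ell_c(t)$ ULs of stack $t$ are lifted for the whole cycle. Then a sequence $(b_{c,1},\dots,b_{c,k})$ of targets is retrieved, with residual heights $d_{c,0}=\ell_c$ and $d_{c,i}(t)=d_{c,i-1}(t)-1$ if $t=s(b_{c,i})$, else $d_{c,i}(t)=d_{c,i-1}(t)$. Retrieving $b$ (stack $t$, height $h=h_c(b)$) as the $i$-th retrieval requires accessibility: (a) $d_{c,i-1}(t)=h+1$ and (b) $d_{c,i-1}(t')=h$ for all $t'<t$. Afterwards lifted ULs are lowered, $h_{c+1}(t)=d_{c,k}(t)+e_c(t)$, and each remaining target's height decreases by the number of targets retrieved in cycle $c$ below it in its stack. Non-targets are never removed. A solution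 is feasible if every target of $\mathcal B$ is retrieved exactly once and is accessible when retrieved. *)

theory Defs
  imports Main
begin

text \<open>Stacks are indexed 1..m. Every unit load (UL) is identified by its initial
position (t,k): stack t, initial height k. A state maps each stack t to the list of
initial heights of the ULs currently in stack t, listed bottom to top; hence the
current height of a UL is its index in that list. A target b is a pair (s b, h b).\<close>

type_synonym state = "nat \<Rightarrow> nat list"

definition init_state :: "nat \<Rightarrow> (nat \<Rightarrow> nat) \<Rightarrow> state" where
  "init_state m h = (\<lambda>t. if 1 \<le> t \<and> t \<le> m then [0..<h t] else [])"

text \<open>Retrieval sequence within one cycle, acting on the residual (non-lifted) stacks d.\<close>
fun run_seq :: "state \<Rightarrow> (nat \<times> nat) list \<Rightarrow> state option" where
  "run_seq d [] = Some d"
| "run_seq d ((t, k) # bs) =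
     (if d t \<noteq> [] \<and> last (d t) = k \<and> (\<forall>t'\<in>{1..<t}. length (d t') = length (d t) - 1)
      then run_seq (d(t := butlast (d t))) bs else None)"

text \<open>A cycle: clearance levels l and a retrieval sequence. The top h_c(t) - l(t) ULs are
lifted, retrievals happen on the residual stacks, then lifted ULs are lowered.\<close>
definition run_cycle :: "nat \<Rightarrow> state \<Rightarrow> (nat \<Rightarrow> nat) \<times> (nat \<times> nat) list \<Rightarrow> state option" where
  "run_cycle m s c =
     (let l = fst c; bs = snd c in
      if \<forall>t\<in>{1..m}. l t \<le> length (s t) then
        (case run_seq (\<lambda>t. take (l t) (s t)) bs of
           None \<Rightarrow> None
         | Some d \<Rightarrow> Some (\<lambda>t. d t @ drop (l t) (s t)))
      else None)"

fun run_cycles :: "nat \<Rightarrow> state \<Rightarrow> ((nat \<Rightarrow> nat) \<times> (nat \<times> nat) list) list \<Rightarrow> state option" where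
  "run_cycles m s [] = Some s"
| "run_cycles m s (c # cs) =
     (case run_cycle m s c of None \<Rightarrow> None | Some s' \<Rightarrow> run_cycles m s' cs)"

definition feasible :: "nat \<Rightarrow> (nat \<Rightarrow> nat) \<Rightarrow> (nat \<times> nat) set \<Rightarrow> bool" where
  "feasible m h B \<longleftrightarrow>
     (\<exists>cs s'. run_cycles m (init_state m h) cs = Some s' \<and>
              distinct (concat (map snd cs)) \<and> set (concat (map snd cs)) = B)"

definition R :: "(nat \<times> nat) set \<Rightarrow> nat \<times> nat \<Rightarrow> nat" where
  "R B b = card {k. (fst b, k) \<in> B \<and> k < snd b}"

end

theory Submission
  imports Defs "HOL-Library.Product_Lexorder"
begin

(* Necessity: non-targets are never removed and the order within a stack is preserved, so
   every non-target initially below a target b is still below it when b is retrieved; hence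
   b then has at least h(b) - R(b) ULs below it. Accessibility forces every stack t < s(b)
   to have exactly that many ULs below its clearance level, and no stack ever exceeds its
   initial height h(t).
   Sufficiency: retrieve one target per cycle, stacks from the far end inwards and each stack
   bottom-up. Then every stack left of s(b) still has its full initial height and b sits at
   height exactly h(b) - R(b); lifting everything above that level on the stacks t < s(b),
   everything above b on s(b) and everything on the stacks beyond makes b accessible. *)

definition well_stacked :: "(nat \<times> nat) set \<Rightarrow> (nat \<Rightarrow> nat) \<Rightarrow> state \<Rightarrow> bool" where
  "well_stacked B h s \<longleftrightarrow>
     (\<forall>t. sorted_wrt (<) (s t) \<and> length (s t) \<le> h t \<and>
          (\<forall>k\<in>set (s t). \<forall>j<k. (t, j) \<notin> B \<longrightarrow> j \<in> set (s t)))"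

lemma card_non_targets_below: "card {j. j < k \<and> (t, j) \<notin> B} = k - R B (t, k)"
proof -
  have "{j. j < k \<and> (t, j) \<notin> B} = {..<k} - {j. (t, j) \<in> B \<and> j < k}" by auto
  then show ?thesis
    unfolding R_def by (simp add: card_Diff_subset[where A = "{..<k}"] subset_eq)
qed

lemma well_stacked_init_state: "well_stacked B h (init_state m h)"
  unfolding well_stacked_def init_state_def by auto

lemma well_stacked_remove_target:
  assumes "well_stacked B h s" "s t = xs @ k # ys" "(t, k) \<in> B"
  shows "well_stacked B h (s(t := xs @ ys))"
proof -
  have "sorted_wrt (<) (xs @ k # ys)" "length (xs @ k # ys) \<le> h t"
    "\<forall>k'\<in>set (xs @ k # ys). \<forall>j<k'. (t, j) \<notin> B \<longrightarrow> j \<in> set (xs @ k # ys)"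
    using assms(1,2) unfolding well_stacked_def by metis+
  then have "sorted_wrt (<) (xs @ ys)" "length (xs @ ys) \<le> h t"
    "\<forall>k'\<in>set (xs @ ys). \<forall>j<k'. (t, j) \<notin> B \<longrightarrow> j \<in> set (xs @ ys)"
    using assms(3) by (auto simp: sorted_wrt_append)
  with assms(1) show ?thesis unfolding well_stacked_def by simp
qed

lemma well_stacked_height_bound:
  assumes "well_stacked B h s" "s t = xs @ k # ys"
  shows "k - R B (t, k) \<le> length xs"
proof -
  have sorted: "sorted_wrt (<) (s t)"
    and "\<forall>k'\<in>set (s t). \<forall>j<k'. (t, j) \<notin> B \<longrightarrow> j \<in> set (s t)"
    using assms(1) unfolding well_stacked_def by blast+
  moreover have "k \<in> set (s t)" using assms(2) by simp
  ultimately have closed: "\<forall>j<k. (t, j) \<notin> B \<longrightarrow> j \<in> set (xs @ k # ys)"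
    using assms(2) by metis
  from sorted have above: "\<forall>y\<in>set ys. k < y" using assms(2) by (simp add: sorted_wrt_append)
  have "{j. j < k \<and> (t, j) \<notin> B} \<subseteq> set xs"
  proof
    fix j assume "j \<in> {j. j < k \<and> (t, j) \<notin> B}"
    then have "j < k" "j \<in> set xs \<or> j \<in> set ys" using closed by auto
    with above show "j \<in> set xs" by auto
  qed
  then have "card {j. j < k \<and> (t, j) \<notin> B} \<le> length xs"
    using card_mono[OF List.finite_set] card_length order_trans by blast
  then show ?thesis by (simp add: card_non_targets_below)
qed

(* Lifted non-targets are missing from the residual stacks d, so the invariant is carried
   on the whole stacks d t @ e t, with e the lifted part. *)
lemma run_seq_necessary:
  assumes "run_seq d bs = Some d'" "well_stacked B h (\<lambda>t. d t @ e t)" "set bs \<subseteq> B"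
  shows "well_stacked B h (\<lambda>t. d' t @ e t) \<and>
         (\<forall>(t, k)\<in>set bs. \<forall>t'\<in>{1..<t}. k - R B (t, k) \<le> h t')"
  using assms
proof (induction bs arbitrary: d)
  case Nil
  then show ?case by simp
next
  case (Cons b bs)
  obtain t k where b: "b = (t, k)" by fastforce
  with Cons.prems(1) have top: "d t = butlast (d t) @ [k]"
    and left: "\<forall>t'\<in>{1..<t}. length (d t') = length (butlast (d t))"
    and rest: "run_seq (d(t := butlast (d t))) bs = Some d'"
    by (auto split: if_splits)
  have stack_t: "d t @ e t = butlast (d t) @ k # e t"
    by (subst top) simp
  have "(\<lambda>t'. (d(t := butlast (d t))) t' @ e t') = (\<lambda>t'. d t' @ e t')(t := butlast (d t) @ e t)"
    by auto
  then have "well_stacked B h (\<lambda>t'. (d(t := butlast (d t))) t' @ e t')"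
    using well_stacked_remove_target[OF Cons.prems(2) stack_t] Cons.prems(3) b by simp
  with Cons.IH[OF rest] Cons.prems(3) have IH:
    "well_stacked B h (\<lambda>t. d' t @ e t)"
    "\<forall>(t, k)\<in>set bs. \<forall>t'\<in>{1..<t}. k - R B (t, k) \<le> h t'"
    by auto
  have "k - R B (t, k) \<le> h t'" if "t' \<in> {1..<t}" for t'
  proof -
    have "k - R B (t, k) \<le> length (butlast (d t))"
      using well_stacked_height_bound[OF Cons.prems(2) stack_t] by simp
    also have "\<dots> = length (d t')" using left that by simp
    also have "\<dots> \<le> length (d t' @ e t')" by simp
    also have "\<dots> \<le> h t'" using Cons.prems(2) unfolding well_stacked_def by blast
    finally show ?thesis .
  qed
  with IH b show ?case by auto
qed

lemma run_cycle_necessary: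
  assumes "run_cycle m s c = Some s'" "well_stacked B h s" "set (snd c) \<subseteq> B"
  shows "well_stacked B h s' \<and>
         (\<forall>(t, k)\<in>set (snd c). \<forall>t'\<in>{1..<t}. k - R B (t, k) \<le> h t')"
proof -
  obtain l bs where c: "c = (l, bs)" by fastforce
  from assms(1) c obtain d' where seq: "run_seq (\<lambda>t. take (l t) (s t)) bs = Some d'"
    and s': "s' = (\<lambda>t. d' t @ drop (l t) (s t))"
    unfolding run_cycle_def by (auto split: if_splits option.splits)
  have "well_stacked B h (\<lambda>t. take (l t) (s t) @ drop (l t) (s t))"
    using assms(2) by simp
  from run_seq_necessary[OF seq this] assms(3) c s' show ?thesis by simp
qed

lemma run_cycles_necessary:
  assumes "run_cycles m s cs = Some s'" "well_stacked B h s" "set (concat (map snd cs)) \<subseteq> B"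
  shows "\<forall>(t, k)\<in>set (concat (map snd cs)). \<forall>t'\<in>{1..<t}. k - R B (t, k) \<le> h t'"
  using assms
proof (induction cs arbitrary: s)
  case Nil
  then show ?case by simp
next
  case (Cons c cs)
  then obtain s1 where first: "run_cycle m s c = Some s1" and rest: "run_cycles m s1 cs = Some s'"
    by (auto split: option.splits)
  from run_cycle_necessary[OF first Cons.prems(2)] Cons.prems(3)
  have "well_stacked B h s1"
    "\<forall>(t, k)\<in>set (snd c). \<forall>t'\<in>{1..<t}. k - R B (t, k) \<le> h t'"
    by auto
  moreover have "set (concat (map snd cs)) \<subseteq> B" using Cons.prems(3) by simp
  ultimately show ?case
    using Cons.IH[OF rest] unfolding list.map concat.simps set_append ball_Un by blast
qed

lemma feasible_imp_height_condition:
  assumes "feasible m h B"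
  shows "\<forall>b\<in>B. \<forall>t\<in>{1..<fst b}. h t \<ge> snd b - R B b"
proof -
  obtain cs s' where run: "run_cycles m (init_state m h) cs = Some s'"
    and retrieved: "set (concat (map snd cs)) = B"
    using assms unfolding feasible_def by blast
  have "\<forall>(t, k)\<in>set (concat (map snd cs)). \<forall>t'\<in>{1..<t}. k - R B (t, k) \<le> h t'"
    by (rule run_cycles_necessary[OF run well_stacked_init_state]) (simp only: retrieved subset_refl)
  then show ?thesis unfolding retrieved by (simp add: split_beta)
qed

definition remaining_state :: "nat \<Rightarrow> (nat \<Rightarrow> nat) \<Rightarrow> (nat \<times> nat) set \<Rightarrow> state" where
  "remaining_state m h X = (\<lambda>t. filter (\<lambda>j. (t, j) \<notin> X) (init_state m h t))"

definition remaining_below :: "(nat \<times> nat) set \<Rightarrow> nat \<times> nat \<Rightarrow> nat" where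
  "remaining_below X b = length (filter (\<lambda>j. (fst b, j) \<notin> X) [0..<snd b])"

definition single_retrieval :: "(nat \<times> nat) set \<Rightarrow> nat \<times> nat \<Rightarrow> (nat \<Rightarrow> nat) \<times> (nat \<times> nat) list" where
  "single_retrieval X b =
     ((\<lambda>t. if t = fst b then Suc (remaining_below X b)
           else if 1 \<le> t \<and> t < fst b then remaining_below X b else 0), [b])"

lemma run_cycle_one_target:
  assumes "\<forall>t'\<in>{1..m}. l t' \<le> length (s t')" "take (l t) (s t) = xs @ [k]"
    "\<forall>t'\<in>{1..<t}. length (take (l t') (s t')) = length xs"
  shows "run_cycle m s (l, [(t, k)]) = Some (s(t := xs @ drop (l t) (s t)))"
proof -
  have "run_seq (\<lambda>t. take (l t) (s t)) [(t, k)] = Some ((\<lambda>t. take (l t) (s t))(t := xs))"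
    using assms(2,3) by simp
  with assms(1,2) show ?thesis
    unfolding run_cycle_def by (auto simp: fun_eq_iff)
qed

lemma run_cycle_single_retrieval:
  assumes "1 \<le> t" "t \<le> m" "k < h t" "(t, k) \<notin> X"
    and fits: "\<forall>t'\<in>{1..<t}. remaining_below X (t, k) \<le> length (remaining_state m h X t')"
  shows "run_cycle m (remaining_state m h X) (single_retrieval X (t, k)) =
         Some (remaining_state m h (insert (t, k) X))"
proof -
  define P where "P = (\<lambda>j. (t, j) \<notin> X)"
  define below where "below = filter P [0..<k]"
  define above where "above = filter P [Suc k..<h t]"
  define l where "l = fst (single_retrieval X (t, k))"
  let ?s = "remaining_state m h X"
  have split: "[0..<h t] = [0..<k] @ k # [Suc k..<h t]"
    using assms(3) by (metis upt_conv_Cons upt_add_eq_append zero_le less_imp_le_nat le_add_diff_inverse)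
  have st: "?s t = below @ k # above"
    using assms(1,2,4) unfolding remaining_state_def init_state_def below_def above_def P_def
    by (simp add: split)
  have l: "single_retrieval X (t, k) = (l, [(t, k)])"
    "l t = Suc (length below)" "\<forall>t'\<in>{1..<t}. l t' = length below" "\<forall>t'>t. l t' = 0"
    unfolding l_def single_retrieval_def remaining_below_def below_def P_def by auto
  have rb: "remaining_below X (t, k) = length below"
    unfolding remaining_below_def below_def P_def by simp
  have "run_cycle m ?s (l, [(t, k)]) = Some (?s(t := below @ drop (l t) (?s t)))"
  proof (rule run_cycle_one_target)
    show "\<forall>t'\<in>{1..m}. l t' \<le> length (?s t')"
    proof
      fix t' assume "t' \<in> {1..m}"
      then consider "t' = t" | "t' \<in> {1..<t}" | "t < t'"
        by (metis atLeastAtMost_iff atLeastLessThan_iff linorder_neqE_nat)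
      then show "l t' \<le> length (?s t')"
      proof cases
        case 1
        then show ?thesis using l st by simp
      next
        case 2
        then show ?thesis using l fits rb by simp
      next
        case 3
        then show ?thesis using l by simp
      qed
    qed
    show "take (l t) (?s t) = below @ [k]" using l st by simp
    show "\<forall>t'\<in>{1..<t}. length (take (l t') (?s t')) = length below"
      using l fits rb by simp
  qed
  also have "?s(t := below @ drop (l t) (?s t)) = remaining_state m h (insert (t, k) X)"
  proof
    fix t'
    show "(?s(t := below @ drop (l t) (?s t))) t' = remaining_state m h (insert (t, k) X) t'"
    proof (cases "t' = t")
      case True
      have "filter (\<lambda>j. (t, j) \<notin> insert (t, k) X) [0..<k] = below"
        unfolding below_def P_def by (rule filter_cong) auto
      moreover have "filter (\<lambda>j. (t, j) \<notin> insert (t, k) X) [Suc k..<h t] = above"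
        unfolding above_def P_def by (rule filter_cong) auto
      ultimately have "filter (\<lambda>j. (t, j) \<notin> insert (t, k) X) [0..<h t] = below @ above"
        unfolding split by simp
      with True assms(1,2) l st show ?thesis
        unfolding remaining_state_def init_state_def by simp
    qed (simp add: remaining_state_def)
  qed
  finally show ?thesis using l by simp
qed

definition retrieval_key :: "nat \<times> nat \<Rightarrow> int \<times> nat" where
  "retrieval_key b = (- int (fst b), snd b)"

lemma retrieval_key_inj: "retrieval_key x = retrieval_key y \<Longrightarrow> x = y"
  unfolding retrieval_key_def by (simp add: prod_eq_iff)

lemma remaining_below_eq:
  assumes "X \<subseteq> B" "\<And>j. (t, j) \<in> B \<Longrightarrow> j < k \<Longrightarrow> (t, j) \<in> X"
  shows "remaining_below X (t, k) = k - R B (t, k)"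
proof -
  have "remaining_below X (t, k) = card {j. j < k \<and> (t, j) \<notin> X}"
    unfolding remaining_below_def by (simp add: length_filter_conv_card cong: conj_cong)
  also have "{j. j < k \<and> (t, j) \<notin> X} = {j. j < k \<and> (t, j) \<notin> B}"
    using assms by blast
  finally show ?thesis by (simp add: card_non_targets_below)
qed

lemma retrievable_from_key_down_set:
  assumes B: "B \<subseteq> {(t, k). 1 \<le> t \<and> t \<le> m \<and> k < h t}" "finite B"
    and H: "\<forall>b\<in>B. \<forall>t\<in>{1..<fst b}. h t \<ge> snd b - R B b"
    and "X \<subseteq> B" "\<forall>x\<in>X. \<forall>y\<in>B. retrieval_key y \<le> retrieval_key x \<longrightarrow> y \<in> X"
  shows "\<exists>cs. run_cycles m (remaining_state m h X) cs = Some (remaining_state m h B) \<and>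
           distinct (concat (map snd cs)) \<and> set (concat (map snd cs)) = B - X"
  using assms(4,5)
proof (induction "card (B - X)" arbitrary: X rule: less_induct)
  case less
  show ?case
  proof (cases "B - X = {}")
    case True
    with less.prems(1) have "X = B" by blast
    then show ?thesis by (intro exI[of _ "[]"]) simp
  next
    case False
    define b where "b = arg_min_on retrieval_key (B - X)"
    obtain t k where tk: "b = (t, k)" by fastforce
    have b: "b \<in> B - X" "\<And>y. y \<in> B - X \<Longrightarrow> retrieval_key b \<le> retrieval_key y"
      using arg_min_if_finite(1)[of "B - X"] arg_min_least[of "B - X"] False B(2)
      unfolding b_def by simp_all
    have X': "insert b X \<subseteq> B"
      "\<forall>x\<in>insert b X. \<forall>y\<in>B. retrieval_key y \<le> retrieval_key x \<longrightarrow> y \<in> insert b X"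
    proof -
      have "y \<in> insert b X" if "y \<in> B" "retrieval_key y \<le> retrieval_key b" for y
        using b(2)[of y] that retrieval_key_inj[of y b] by (cases "y \<in> X") auto
      then show "\<forall>x\<in>insert b X. \<forall>y\<in>B. retrieval_key y \<le> retrieval_key x \<longrightarrow> y \<in> insert b X"
        using less.prems(2) by blast
    qed (use b less.prems(1) in blast)
    have "card (B - insert b X) < card (B - X)"
      using b(1) B(2) by (metis Diff_insert card_Diff1_less finite_Diff)
    with less.hyps X' obtain cs where cs:
      "run_cycles m (remaining_state m h (insert b X)) cs = Some (remaining_state m h B)"
      "distinct (concat (map snd cs))" "set (concat (map snd cs)) = B - insert b X"
      by blast
    have tk_bounds: "1 \<le> t" "t \<le> m" "k < h t" using b(1) B(1) tk by auto
    have below_retrieved: "(t, j) \<in> X" if "(t, j) \<in> B" "j < k" for j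
      using b(2)[of "(t, j)"] that tk unfolding retrieval_key_def by fastforce
    have left_untouched: "(t', j) \<notin> X" if "t' < t" for t' j
      using less.prems(2) b(1) that tk unfolding retrieval_key_def by fastforce
    have "\<forall>t'\<in>{1..<t}. remaining_below X (t, k) \<le> length (remaining_state m h X t')"
    proof
      fix t' assume t': "t' \<in> {1..<t}"
      have "remaining_state m h X t' = [0..<h t']"
        using t' tk_bounds left_untouched unfolding remaining_state_def init_state_def by auto
      then show "remaining_below X (t, k) \<le> length (remaining_state m h X t')"
        using remaining_below_eq[OF less.prems(1) below_retrieved] H b(1) t' tk by fastforce
    qed
    with run_cycle_single_retrieval tk_bounds b(1) tk
    have "run_cycle m (remaining_state m h X) (single_retrieval X b) =
          Some (remaining_state m h (insert b X))"
      by blast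
    moreover have "snd (single_retrieval X b) = [b]" by (simp add: single_retrieval_def)
    ultimately show ?thesis
      using cs b(1) by (intro exI[of _ "single_retrieval X b # cs"]) auto
  qed
qed

lemma height_condition_imp_feasible:
  assumes "B \<subseteq> {(t, k). 1 \<le> t \<and> t \<le> m \<and> k < h t}"
    and "\<forall>b\<in>B. \<forall>t\<in>{1..<fst b}. h t \<ge> snd b - R B b"
  shows "feasible m h B"
proof -
  have "B \<subseteq> Sigma {1..m} (\<lambda>t. {..<h t})" using assms(1) by auto
  then have "finite B" by (rule finite_subset) auto
  from retrievable_from_key_down_set[OF assms(1) this assms(2), of "{}"] obtain cs where
    "run_cycles m (remaining_state m h {}) cs = Some (remaining_state m h B)"
    "distinct (concat (map snd cs))" "set (concat (map snd cs)) = B"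
    by auto
  moreover have "remaining_state m h {} = init_state m h"
    by (simp add: remaining_state_def)
  ultimately show ?thesis unfolding feasible_def by auto
qed

theorem lemma1:
  fixes m :: nat and h :: "nat \<Rightarrow> nat" and B :: "(nat \<times> nat) set"
  assumes "B \<subseteq> {(t, k). 1 \<le> t \<and> t \<le> m \<and> k < h t}"
  shows "feasible m h B \<longleftrightarrow>
         (\<forall>b\<in>B. \<forall>t\<in>{1..<fst b}. h t \<ge> snd b - R B b)"
proof
  assume "feasible m h B"
  then show "\<forall>b\<in>B. \<forall>t\<in>{1..<fst b}. h t \<ge> snd b - R B b"
    by (rule feasible_imp_height_condition)
next
  assume "\<forall>b\<in>B. \<forall>t\<in>{1..<fst b}. h t \<ge> snd b - R B b"
  with assms show "feasible m h B" by (rule height_condition_imp_feasible)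
qed

end
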